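(* Let $n\ge0$. For all $i,j\in\{1,\dots,\widetilde\mu_n\}$, the $(i,j)$-entry of $\chi^{(n)}$ is $$\chi^{(n)}_{i,j}=\frac{1}{d_n}\sum_{a=1}^{d_n}p_n\!\left(\mathbf{e}\!\left[\frac{a}{d_n}\right]\right)\mathbf{e}\!\left[\frac{a}{d_n}(i-j)\right].$$
   Context: Fix integers $a_1,a_2,\ldots\ge2$, $d_0=1$, $d_i=a_1\cdots a_i$, $\widetilde\mu_n=\sum_{i=0}^n(-1)^{n-i}d_i$, $\mathbf{e}[\alpha]=\exp(2\pi\sqrt{-1}\alpha)$. $\chi^{(n)}$ is the $\widetilde\mu_n\times\widetilde\mu_n$ matrix $1/\varphi_n(N)$, where $N=(\delta_{i+1,j})$ is the nilpotent shift matrix and $\varphi_n(t)=\prod_{i=0}^n(1-t^{d_i})^{(-1)^{n-i}}$ for $n\ge1$, $\varphi_0(t)=1-t$ (expand $1/\varphi_n(t)$ as a power series in $t$ and substitute $N$). $p_n(t)=\prod_{i=1}^n(1-t^{d_{i-1}})^{(-1)^{n-i}}$ for $n\ge1$ and $p_0(t)=1$; $p_n$ is a polynomial. *)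

theory Defs
  imports Complex_Main "Jordan_Normal_Form.Matrix"
    "HOL-Computational_Algebra.Formal_Power_Series"
    "HOL-Computational_Algebra.Polynomial_FPS"
begin

text \<open>The sequence a_1, a_2, ... is a function a :: nat => nat (a 0 unused).\<close>

definition dd :: "(nat \<Rightarrow> nat) \<Rightarrow> nat \<Rightarrow> nat" where
  "dd a i = (\<Prod>k\<in>{1..i}. a k)"

definition mu_tilde :: "(nat \<Rightarrow> nat) \<Rightarrow> nat \<Rightarrow> int" where
  "mu_tilde a n = (\<Sum>i\<in>{0..n}. (-1) ^ (n - i) * int (dd a i))"

definition ee :: "real \<Rightarrow> complex" where
  "ee \<alpha> = exp (2 * of_real pi * \<i> * of_real \<alpha>)"

definition fac_fps :: "nat \<Rightarrow> nat \<Rightarrow> complex fps" where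
  "fac_fps e m = (if even e then 1 - fps_X ^ m else inverse (1 - fps_X ^ m))"

definition phi_fps :: "(nat \<Rightarrow> nat) \<Rightarrow> nat \<Rightarrow> complex fps" where
  "phi_fps a n = (if n = 0 then 1 - fps_X
     else (\<Prod>i\<in>{0..n}. fac_fps (n - i) (dd a i)))"

text \<open>p_n(t) = prod_{i=1}^n (1 - t^{d_{i-1}})^{(-1)^{n-i}} (p_0 = 1), as a power series;
  p_n is a polynomial, and p_poly is that polynomial.\<close>
definition p_fps :: "(nat \<Rightarrow> nat) \<Rightarrow> nat \<Rightarrow> complex fps" where
  "p_fps a n = (\<Prod>i\<in>{1..n}. fac_fps (n - i) (dd a (i - 1)))"

definition p_poly :: "(nat \<Rightarrow> nat) \<Rightarrow> nat \<Rightarrow> complex poly" where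
  "p_poly a n = (THE p. fps_of_poly p = p_fps a n)"

definition shift_mat :: "nat \<Rightarrow> complex mat" where
  "shift_mat m = mat m m (\<lambda>(i, j). if i + 1 = j then 1 else 0)"

text \<open>chi^{(n)} = 1/phi_n(N) = sum_k c_k N^k, where 1/phi_n(t) = sum_k c_k t^k;
  the sum is finite since N^m = 0 for the m x m shift matrix.\<close>
definition chi :: "(nat \<Rightarrow> nat) \<Rightarrow> nat \<Rightarrow> complex mat" where
  "chi a n = (let m = nat (mu_tilde a n); c = inverse (phi_fps a n) in
     foldr (\<lambda>k A. fps_nth c k \<cdot>\<^sub>m (shift_mat m ^\<^sub>m k) + A) [0..<m] (0\<^sub>m m m))"

end

theory Submission
  imports Defs
begin

text \<open>Since \<open>\<phi>\<^sub>n p\<^sub>n = 1 - t\<^bsup>d\<^sub>n\<^esup>\<close>, the series \<open>1/\<phi>\<^sub>n = p\<^sub>n/(1 - t\<^bsup>d\<^sub>n\<^esup>)\<close>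
  agrees with the polynomial \<open>p\<^sub>n\<close> below degree \<open>d\<^sub>n\<close>. The upper triangular Toeplitz matrix
  \<open>1/\<phi>\<^sub>n(N)\<close> therefore has the coefficient of \<open>t\<^bsup>j-i\<^esup>\<close> in \<open>p\<^sub>n\<close> as its \<open>(i,j)\<close>-entry. The
  right-hand side extracts exactly this coefficient by the orthogonality of \<open>d\<^sub>n\<close>-th roots of
  unity: it sums the coefficients of \<open>t\<^bsup>l\<^esup>\<close> with \<open>d\<^sub>n | l + i - j\<close>, and
  \<open>deg p\<^sub>n \<le> d\<^sub>n - \<mu>\<^sub>n\<close> together with \<open>|i - j| < \<mu>\<^sub>n \<le> d\<^sub>n\<close> leaves only \<open>l = j - i\<close>.\<close>

lemma dd_0 [simp]: "dd a 0 = 1"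
  by (simp add: dd_def)

lemma dd_Suc: "dd a (Suc n) = dd a n * a (Suc n)"
  by (simp add: dd_def prod.cl_ivl_Suc)

lemma dd_pos:
  assumes "\<And>k. k \<ge> 1 \<Longrightarrow> a k \<ge> 2"
  shows "dd a n > 0"
proof (induction n)
  case (Suc n)
  then show ?case using assms[of "Suc n"] by (simp add: dd_Suc)
qed simp

lemma mu_tilde_0 [simp]: "mu_tilde a 0 = 1"
  by (simp add: mu_tilde_def)

lemma mu_tilde_Suc: "mu_tilde a (Suc n) = int (dd a (Suc n)) - mu_tilde a n"
proof -
  have "mu_tilde a (Suc n) =
      (\<Sum>i\<in>{0..n}. (-1) ^ (Suc n - i) * int (dd a i)) + int (dd a (Suc n))"
    by (simp add: mu_tilde_def sum.cl_ivl_Suc)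
  also have "(\<Sum>i\<in>{0..n}. (-1) ^ (Suc n - i) * int (dd a i)) = - mu_tilde a n"
    unfolding mu_tilde_def sum_negf[symmetric]
    by (rule sum.cong) (auto simp: Suc_diff_le)
  finally show ?thesis by simp
qed

lemma mu_tilde_bounds:
  assumes "\<And>k. k \<ge> 1 \<Longrightarrow> a k \<ge> 2"
  shows "1 \<le> mu_tilde a n \<and> mu_tilde a n \<le> int (dd a n)"
proof (induction n)
  case (Suc n)
  have "dd a n \<ge> 1" using dd_pos[OF assms] by (simp add: Suc_le_eq)
  moreover have "dd a (Suc n) \<ge> 2 * dd a n"
    using assms[of "Suc n"] by (simp add: dd_Suc)
  ultimately show ?case using Suc by (simp add: mu_tilde_Suc)
qed simp

lemma fac_fps_Suc_Suc [simp]: "fac_fps (Suc (Suc e)) m = fac_fps e m"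
  by (simp add: fac_fps_def)

lemma fac_fps_Suc_mult_fac_fps:
  assumes "m > 0"
  shows "fac_fps (Suc e) m * fac_fps e m = 1"
proof -
  have "fps_nth (1 - fps_X ^ m :: complex fps) 0 \<noteq> 0" using assms by simp
  then show ?thesis
    by (cases "even e") (simp_all add: fac_fps_def inverse_mult_eq_1 inverse_mult_eq_1')
qed

lemma p_fps_Suc_Suc:
  "p_fps a (Suc (Suc n)) = p_fps a n * fac_fps 1 (dd a n) * fac_fps 0 (dd a (Suc n))"
proof -
  have "p_fps a (Suc (Suc n)) = (\<Prod>i\<in>{1..n}. fac_fps (Suc (Suc n) - i) (dd a (i - 1)))
      * fac_fps 1 (dd a n) * fac_fps 0 (dd a (Suc n))"
    by (simp add: p_fps_def prod.cl_ivl_Suc)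
  also have "(\<Prod>i\<in>{1..n}. fac_fps (Suc (Suc n) - i) (dd a (i - 1))) = p_fps a n"
    unfolding p_fps_def by (rule prod.cong) (auto simp: Suc_diff_le)
  finally show ?thesis .
qed

text \<open>The factors of \<open>\<phi>\<^sub>n\<close> and \<open>p\<^sub>n\<close> with the same \<open>d\<^sub>i\<close>, \<open>i < n\<close>, carry opposite exponents.\<close>

lemma phi_fps_mult_p_fps:
  assumes "\<And>k. k \<ge> 1 \<Longrightarrow> a k \<ge> 2"
  shows "phi_fps a n * p_fps a n = 1 - fps_X ^ dd a n"
proof (cases n)
  case 0
  then show ?thesis by (simp add: phi_fps_def p_fps_def)
next
  case (Suc m)
  have phi: "phi_fps a n =
      (\<Prod>i\<in>{0..m}. fac_fps (Suc m - i) (dd a i)) * fac_fps 0 (dd a (Suc m))"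
    using Suc by (simp add: phi_fps_def prod.cl_ivl_Suc)
  have p: "p_fps a n = (\<Prod>i\<in>{0..m}. fac_fps (m - i) (dd a i))"
    using Suc prod.shift_bounds_cl_Suc_ivl[where m=0 and n=m
        and g="\<lambda>i. fac_fps (Suc m - i) (dd a (i - 1))"]
    by (simp add: p_fps_def)
  have cancel: "(\<Prod>i\<in>{0..m}. fac_fps (Suc m - i) (dd a i)) *
      (\<Prod>i\<in>{0..m}. fac_fps (m - i) (dd a i)) = 1"
    unfolding prod.distrib[symmetric]
    by (rule prod.neutral) (auto simp: Suc_diff_le fac_fps_Suc_mult_fac_fps dd_pos[OF assms])
  have "phi_fps a n * p_fps a n = fac_fps 0 (dd a (Suc m))"
    unfolding phi p using cancel by (metis mult.commute mult.left_commute mult_1_right)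
  then show ?thesis using Suc by (simp add: fac_fps_def)
qed

text \<open>Explicitly, \<open>p\<^sub>n\<^sub>+\<^sub>2 = p\<^sub>n (1 - t\<^bsup>d\<^sub>n\<^sub>+\<^sub>1\<^esup>) / (1 - t\<^bsup>d\<^sub>n\<^esup>)\<close>, a geometric sum since
  \<open>d\<^sub>n\<^sub>+\<^sub>1 = a\<^sub>n\<^sub>+\<^sub>1 d\<^sub>n\<close>.\<close>

fun p_poly_rec :: "(nat \<Rightarrow> nat) \<Rightarrow> nat \<Rightarrow> complex poly" where
  "p_poly_rec a 0 = 1"
| "p_poly_rec a (Suc 0) = [:1, -1:]"
| "p_poly_rec a (Suc (Suc n)) = p_poly_rec a n * (\<Sum>t<a (Suc n). monom 1 (t * dd a n))"

lemma fps_of_poly_p_poly_rec: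
  assumes "\<And>k. k \<ge> 1 \<Longrightarrow> a k \<ge> 2"
  shows "fps_of_poly (p_poly_rec a n) = p_fps a n"
  using assms
proof (induction a n rule: p_poly_rec.induct)
  case (1 a)
  show ?case by (simp add: p_fps_def)
next
  case (2 a)
  show ?case by (simp add: p_fps_def fac_fps_def fps_of_poly_pCons)
next
  case (3 a n)
  define Y where "Y = (fps_X ^ dd a n :: complex fps)"
  have "fps_nth (1 - Y) 0 \<noteq> 0" using dd_pos[OF "3.prems"] by (simp add: Y_def)
  then have "fac_fps 1 (dd a n) * fac_fps 0 (dd a (Suc n)) =
      inverse (1 - Y) * ((1 - Y) * (\<Sum>t<a (Suc n). Y ^ t))"
    by (simp add: fac_fps_def dd_Suc power_mult Y_def one_diff_power_eq[symmetric])
  also have "\<dots> = (\<Sum>t<a (Suc n). Y ^ t)"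
    using \<open>fps_nth (1 - Y) 0 \<noteq> 0\<close> by (simp add: mult.assoc[symmetric] inverse_mult_eq_1)
  also have "\<dots> = fps_of_poly (\<Sum>t<a (Suc n). monom 1 (t * dd a n))"
    unfolding fps_of_poly_sum Y_def
    by (intro sum.cong refl) (simp add: fps_of_poly_monom' power_mult[symmetric] mult.commute)
  finally show ?case using 3
    by (simp add: p_fps_Suc_Suc fps_of_poly_mult mult.assoc)
qed

lemma degree_p_poly_rec:
  assumes "\<And>k. k \<ge> 1 \<Longrightarrow> a k \<ge> 2"
  shows "int (degree (p_poly_rec a n)) \<le> int (dd a n) - mu_tilde a n"
  using assms
proof (induction a n rule: p_poly_rec.induct)
  case (3 a n)
  let ?G = "\<Sum>t<a (Suc n). monom (1::complex) (t * dd a n)"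
  have G: "degree ?G \<le> (a (Suc n) - 1) * dd a n"
  proof (rule degree_sum_le)
    fix t assume "t \<in> {..<a (Suc n)}"
    then have "t * dd a n \<le> (a (Suc n) - 1) * dd a n" by (intro mult_le_mono1) auto
    then show "degree (monom (1::complex) (t * dd a n)) \<le> (a (Suc n) - 1) * dd a n"
      using degree_monom_le order.trans by blast
  qed simp
  then have "degree (p_poly_rec a (Suc (Suc n))) \<le> degree (p_poly_rec a n) + (a (Suc n) - 1) * dd a n"
    using order.trans[OF degree_mult_le add_left_mono[OF G]] by simp
  then have "int (degree (p_poly_rec a (Suc (Suc n)))) \<le>
      int (degree (p_poly_rec a n)) + int ((a (Suc n) - 1) * dd a n)"
    by (metis of_nat_add of_nat_mono)
  moreover have "int ((a (Suc n) - 1) * dd a n) = int (dd a (Suc n)) - int (dd a n)"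
    using "3.prems"[of "Suc n"] by (simp add: dd_Suc of_nat_diff algebra_simps)
  ultimately show ?case
    using "3.IH"[OF "3.prems"] mu_tilde_Suc[of a "Suc n"] mu_tilde_Suc[of a n] by linarith
qed (simp_all add: mu_tilde_Suc dd_Suc)

lemma p_poly_eqI:
  assumes "fps_of_poly q = p_fps a n"
  shows "p_poly a n = q"
  unfolding p_poly_def
  by (rule the_equality) (use assms in \<open>simp_all flip: fps_of_poly_eq_iff\<close>)

lemma fps_nth_inverse_eq_of_mult_eq:
  fixes f g :: "'a :: field fps"
  assumes "f * g = 1 - fps_X ^ D" and "k < D"
  shows "fps_nth (inverse f) k = fps_nth g k"
proof -
  have "fps_nth (f * g) 0 = 1" using assms by simp
  then have "fps_nth f 0 \<noteq> 0" by auto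
  then have "inverse f * (1 - fps_X ^ D) = g"
    by (simp flip: assms(1) add: mult.assoc[symmetric] inverse_mult_eq_1)
  then show ?thesis
    using assms(2) by (metis right_diff_distrib mult_1_right fps_X_power_mult_right_nth
        fps_sub_nth diff_zero not_le)
qed

lemma dim_shift_mat [simp]:
  "dim_row (shift_mat m) = m" "dim_col (shift_mat m) = m"
  by (simp_all add: shift_mat_def)

lemma shift_mat_pow_nth:
  assumes "r < m" "s < m"
  shows "(shift_mat m ^\<^sub>m k) $$ (r, s) = (if s = r + k then 1 else 0)"
  using assms(2)
proof (induction k arbitrary: s)
  case (Suc k)
  have "(shift_mat m ^\<^sub>m Suc k) $$ (r, s) =
      (\<Sum>t<m. (shift_mat m ^\<^sub>m k) $$ (r, t) * shift_mat m $$ (t, s))"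
    using assms Suc.prems by (simp add: shift_mat_def scalar_prod_def lessThan_atLeast0)
  also have "\<dots> = (\<Sum>t<m. if t = r + k then (if t + 1 = s then 1 else 0) else 0)"
    using Suc by (intro sum.cong refl) (simp add: shift_mat_def)
  also have "\<dots> = (if s = r + Suc k then 1 else 0)"
    using Suc.prems by (auto simp: sum.delta')
  finally show ?case .
qed (use assms(1) in simp)

lemma shift_mat_series_nth:
  assumes "r < m" "s < m"
  shows "foldr (\<lambda>k A. c k \<cdot>\<^sub>m (shift_mat m ^\<^sub>m k) + A) xs (0\<^sub>m m m) $$ (r, s) =
      (\<Sum>k\<leftarrow>xs. if s = r + k then c k else 0)
    \<and> dim_row (foldr (\<lambda>k A. c k \<cdot>\<^sub>m (shift_mat m ^\<^sub>m k) + A) xs (0\<^sub>m m m)) = m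
    \<and> dim_col (foldr (\<lambda>k A. c k \<cdot>\<^sub>m (shift_mat m ^\<^sub>m k) + A) xs (0\<^sub>m m m)) = m"
  using assms by (induction xs) (auto simp: shift_mat_pow_nth)

lemma chi_nth:
  assumes "r < nat (mu_tilde a n)" "s < nat (mu_tilde a n)"
  shows "chi a n $$ (r, s) = (if r \<le> s then fps_nth (inverse (phi_fps a n)) (s - r) else 0)"
proof -
  let ?m = "nat (mu_tilde a n)"
  let ?c = "fps_nth (inverse (phi_fps a n))"
  have "chi a n $$ (r, s) = (\<Sum>k\<leftarrow>[0..<?m]. if s = r + k then ?c k else 0)"
    unfolding chi_def Let_def using shift_mat_series_nth[OF assms] by blast
  also have "\<dots> = (\<Sum>k\<in>{0..<?m}. if k = s - r \<and> r \<le> s then ?c k else 0)"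
    by (simp add: sum_set_upt_conv_sum_list_nat[symmetric]) (intro sum.cong refl, auto)
  also have "\<dots> = (if r \<le> s then ?c (s - r) else 0)"
    using assms by (auto simp: sum.delta')
  finally show ?thesis .
qed

lemma ee_cis: "ee x = cis (2 * pi * x)"
  by (simp add: ee_def cis_conv_exp mult_ac)

lemma ee_add: "ee x * ee y = ee (x + y)"
  by (simp add: ee_def exp_add[symmetric] distrib_left)

lemma ee_power: "ee x ^ l = ee (real l * x)"
  by (simp add: ee_def exp_of_nat_mult[symmetric] mult_ac)

lemma ee_eq_1_iff: "ee x = 1 \<longleftrightarrow> x \<in> \<int>"
proof
  assume "ee x = 1"
  then have "cos (2 * pi * x) = 1"
    by (simp add: ee_cis complex_eq_iff)
  then obtain z :: int where "2 * pi * x = real_of_int z * 2 * pi"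
    using cos_one_2pi_int by blast
  then show "x \<in> \<int>" by simp
next
  assume "x \<in> \<int>"
  then show "ee x = 1"
    by (auto elim!: Ints_cases simp: ee_cis intro: cis_multiple_2pi)
qed

lemma sum_ee_root_of_unity:
  fixes D :: nat and e :: int
  assumes "D > 0"
  shows "(\<Sum>b = 1..D. ee (real b / real D * of_int e)) = (if int D dvd e then of_nat D else 0)"
proof -
  define w where "w = ee (of_int e / real D)"
  have powers: "ee (real b / real D * of_int e) = w ^ b" for b
    unfolding w_def ee_power by (simp add: field_simps)
  have "w = 1 \<longleftrightarrow> int D dvd e"
  proof -
    have "of_int e / real D \<in> \<int> \<longleftrightarrow> (\<exists>z::int. e = int D * z)"
      using assms by (auto elim!: Ints_cases simp: field_simps)
        (metis of_int_eq_iff of_int_mult of_int_of_nat_eq)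
    then show ?thesis by (simp add: w_def ee_eq_1_iff dvd_def)
  qed
  moreover have "w ^ D = 1"
    unfolding w_def ee_power using assms by (simp add: ee_eq_1_iff)
  moreover have "(\<Sum>b = 1..D. w ^ b) = w * (\<Sum>b<D. w ^ b)"
    by (simp add: sum.atLeast1_atMost_eq sum_distrib_left)
  ultimately show ?thesis
    unfolding powers by (auto simp: geometric_sum)
qed

lemma sum_poly_ee_eq_sum_coeff:
  fixes q :: "complex poly" and D :: nat and e :: int
  assumes "D > 0"
  shows "(\<Sum>b = 1..D. poly q (ee (real b / real D)) * ee (real b / real D * of_int e))
    = of_nat D * (\<Sum>l\<le>degree q. if int D dvd int l + e then coeff q l else 0)"
proof -
  have monomial: "ee (real b / real D) ^ l * ee (real b / real D * of_int e) =
      ee (real b / real D * of_int (int l + e))" for b l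
    by (simp add: ee_power ee_add algebra_simps add_divide_distrib)
  have "(\<Sum>b = 1..D. poly q (ee (real b / real D)) * ee (real b / real D * of_int e)) =
      (\<Sum>l\<le>degree q. coeff q l * (\<Sum>b = 1..D. ee (real b / real D * of_int (int l + e))))"
    unfolding poly_altdef sum_distrib_right sum_distrib_left
    by (subst sum.swap) (simp only: mult.assoc monomial)
  also have "\<dots> = of_nat D * (\<Sum>l\<le>degree q. if int D dvd int l + e then coeff q l else 0)"
    by (simp only: sum_ee_root_of_unity[OF assms] sum_distrib_left) (intro sum.cong refl, simp)
  finally show ?thesis .
qed

lemma sum_poly_ee_eq_coeff:
  fixes q :: "complex poly" and D :: nat and e :: int
  assumes "- int D < e" and "int (degree q) + e < int D"
  shows "(1 / of_nat D) * (\<Sum>b = 1..D. poly q (ee (real b / real D)) * ee (real b / real D * of_int e))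
    = (if e \<le> 0 then coeff q (nat (- e)) else 0)"
proof -
  have "D > 0" using assms by linarith
  have divisible: "int D dvd int l + e \<longleftrightarrow> int l = - e" if "l \<le> degree q" for l
  proof
    assume "int D dvd int l + e"
    moreover have "\<bar>int l + e\<bar> < int D" using that assms by linarith
    ultimately show "int l = - e" using dvd_imp_le_int[of "int l + e" "int D"] by linarith
  qed simp
  have "(1 / of_nat D) * (\<Sum>b = 1..D. poly q (ee (real b / real D)) * ee (real b / real D * of_int e))
    = (\<Sum>l\<le>degree q. if int D dvd int l + e then coeff q l else 0)"
    using sum_poly_ee_eq_sum_coeff[OF \<open>D > 0\<close>, of q e] \<open>D > 0\<close> by simp
  also have "\<dots> = (\<Sum>l\<le>degree q. if l = nat (- e) \<and> e \<le> 0 then coeff q l else 0)"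
    using divisible by (intro sum.cong refl) auto
  also have "\<dots> = (if e \<le> 0 then coeff q (nat (- e)) else 0)"
    by (auto simp: sum.delta coeff_eq_0)
  finally show ?thesis .
qed

theorem lemma4p2:
  fixes a :: "nat \<Rightarrow> nat" and n i j :: nat
  assumes "\<And>k. k \<ge> 1 \<Longrightarrow> a k \<ge> 2"
    and "1 \<le> i" and "int i \<le> mu_tilde a n"
    and "1 \<le> j" and "int j \<le> mu_tilde a n"
  shows "chi a n $$ (i - 1, j - 1) =
    (1 / of_nat (dd a n)) * (\<Sum>b = 1..dd a n.
       poly (p_poly a n) (ee (real b / real (dd a n))) *
       ee (real b / real (dd a n) * (real_of_int (int i - int j))))"
proof -
  note a_ge_2 = assms(1)
  have mu: "1 \<le> mu_tilde a n" "mu_tilde a n \<le> int (dd a n)"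
    using mu_tilde_bounds[OF a_ge_2] by auto
  have deg: "int (degree (p_poly_rec a n)) \<le> int (dd a n) - mu_tilde a n"
    by (rule degree_p_poly_rec[OF a_ge_2])
  have "chi a n $$ (i - 1, j - 1) =
      (if i \<le> j then fps_nth (inverse (phi_fps a n)) (j - i) else 0)"
  proof -
    have "i - 1 < nat (mu_tilde a n)" "j - 1 < nat (mu_tilde a n)"
      "i - 1 \<le> j - 1 \<longleftrightarrow> i \<le> j" "j - 1 - (i - 1) = j - i"
      using assms by linarith+
    then show ?thesis using chi_nth[of "i - 1" a n "j - 1"] by simp
  qed
  also have "\<dots> = (if i \<le> j then coeff (p_poly_rec a n) (j - i) else 0)"
    using fps_nth_inverse_eq_of_mult_eq[OF phi_fps_mult_p_fps[OF a_ge_2], where k = "j - i"]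
      assms mu by (simp add: fps_of_poly_p_poly_rec[OF a_ge_2, symmetric])
  also have "\<dots> = (1 / of_nat (dd a n)) * (\<Sum>b = 1..dd a n.
       poly (p_poly_rec a n) (ee (real b / real (dd a n))) *
       ee (real b / real (dd a n) * (real_of_int (int i - int j))))"
    by (subst sum_poly_ee_eq_coeff) (use assms mu deg in \<open>auto simp: nat_diff_distrib\<close>)
  finally show ?thesis
    by (simp only: p_poly_eqI[OF fps_of_poly_p_poly_rec[OF a_ge_2]])
qed

end
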